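(* Fix $\theta\in(0,\pi/2)$, let $\lambda=\left(\frac{\sqrt d}{2\log d}\right)^d$ and $\Delta=s_d(\theta)\lambda$, and let $\mathbf X$ be a Poisson point process of intensity $\lambda$ on $S^{d-1}$ with respect to normalised surface measure. If $d$ is sufficiently large, then \[ \mathbb{E}\left|\left\{x\in\mathbf X:|\mathbf X\cap C_x(\theta)|\geq\Delta\big(1+\Delta^{-1/3}\big)\right\}\right|\leq(2d)^{-1}\,\mathbb{E}|\mathbf X|. \]
   Context: $S^{d-1}$ is the unit sphere in $\mathbb{R}^d$ with surface measure normalised to total mass $1$; $C_x(\theta)=\{y\in S^{d-1}:\langle x,y\rangle\geq\cos\theta\}$ and $s_d(\theta)$ is its normalised measure. $\log$ is the natural logarithm. *)

theory Defs
  imports "HOL-Analysis.Analysis"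
begin

text \<open>Euclidean space R^d, realised as extensional functions on the index set {..<d}
  with the product Lebesgue measure (so that the dimension d can be quantified over).\<close>

definition eucl :: "nat \<Rightarrow> (nat \<Rightarrow> real) measure" where
  "eucl d = (\<Pi>\<^sub>M i\<in>{..<d}. lborel)"

definition enorm :: "nat \<Rightarrow> (nat \<Rightarrow> real) \<Rightarrow> real" where
  "enorm d x = sqrt (\<Sum>i<d. (x i)\<^sup>2)"

definition einner :: "nat \<Rightarrow> (nat \<Rightarrow> real) \<Rightarrow> (nat \<Rightarrow> real) \<Rightarrow> real" where
  "einner d x y = (\<Sum>i<d. x i * y i)"

definition usphere :: "nat \<Rightarrow> (nat \<Rightarrow> real) set" where
  "usphere d = {x \<in> space (eucl d). enorm d x = 1}"

text \<open>Normalised surface measure on S^{d-1} (total mass 1): the image of the uniform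
  probability measure on the punctured open unit ball under radial projection
  x \<mapsto> x/|x| (the cone-measure description of normalised surface measure).\<close>
definition sphere_measure :: "nat \<Rightarrow> (nat \<Rightarrow> real) measure" where
  "sphere_measure d =
     distr (uniform_measure (eucl d) {x \<in> space (eucl d). 0 < enorm d x \<and> enorm d x < 1})
           (eucl d) (\<lambda>x. restrict (\<lambda>i. x i / enorm d x) {..<d})"

definition cap :: "nat \<Rightarrow> (nat \<Rightarrow> real) \<Rightarrow> real \<Rightarrow> (nat \<Rightarrow> real) set" where
  "cap d x \<theta> = {y \<in> usphere d. einner d x y \<ge> cos \<theta>}"

text \<open>s_d(theta): normalised measure of a cap (centred at the first basis vector;
  by rotation invariance this is independent of the centre).\<close>
definition sd :: "nat \<Rightarrow> real \<Rightarrow> real" where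
  "sd d \<theta> = measure (sphere_measure d)
      (cap d (restrict (\<lambda>i. if i = 0 then 1 else 0) {..<d}) \<theta>)"

text \<open>Expectation of a nonnegative functional F of a Poisson point process of intensity
  lam (w.r.t. normalised surface measure, of total mass 1) on S^{d-1}. We use the standard
  construction: the number of points N is Poisson(lam), and given N = n the points
  xs 0, ..., xs (n-1) are i.i.d. with law sphere_measure d. F n xs evaluates the functional
  on the configuration {xs 0, ..., xs (n-1)} (as a multiset).\<close>
definition ppp_expect ::
    "nat \<Rightarrow> real \<Rightarrow> (nat \<Rightarrow> (nat \<Rightarrow> nat \<Rightarrow> real) \<Rightarrow> ennreal) \<Rightarrow> ennreal" where
  "ppp_expect d lam F =
     (\<Sum>n. ennreal (lam ^ n / fact n * exp (- lam)) *
           (\<integral>\<^sup>+ xs. F n xs \<partial>(\<Pi>\<^sub>M k\<in>{..<n}. sphere_measure d)))"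

definition cap_count :: "nat \<Rightarrow> real \<Rightarrow> nat \<Rightarrow> (nat \<Rightarrow> nat \<Rightarrow> real) \<Rightarrow> nat \<Rightarrow> nat" where
  "cap_count d \<theta> n xs j = card {k \<in> {..<n}. xs k \<in> cap d (xs j) \<theta>}"

end

theory Submission
  imports Defs "HOL-Probability.Infinite_Product_Measure" "HOL-Real_Asymp.Real_Asymp"
begin

text \<open>
  Normalised surface measure is the normalised volume of the cone over a set, and rotations,
  being products of shears, preserve volume; hence the cap of every point of the sphere has
  measure \<open>s\<^sub>d(\<theta>)\<close>. The cone over a cap contains a ball of radius \<open>(1 - cos \<theta>) / 4\<close>, so
  \<open>s\<^sub>d(\<theta>) \<ge> ((1 - cos \<theta>) / 4)^d\<close>, and \<open>\<Delta> \<ge> 2^d\<close> for large \<open>d\<close>.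

  Given \<open>n\<close> points, they are independent and uniform, so the exponential Markov inequality
  with \<open>u = \<Delta>^(-1/3) / 2\<close> bounds the expected number of points whose cap contains at least
  \<open>t = \<Delta> (1 + \<Delta>^(-1/3))\<close> points by \<open>n e^(u (1 - t)) (1 + s\<^sub>d(\<theta>) (e^u - 1))^(n - 1)\<close>.
  Averaging over the Poisson number of points gives \<open>\<lambda> exp (u (1 - t) + \<Delta> (e^u - 1))\<close>, which
  is at most \<open>\<lambda> exp (1 - \<Delta>^(1/3) / 4) \<le> \<lambda> / (2 d)\<close> once \<open>\<Delta>^(1/3) \<ge> 12 d\<close>, whereas the expected
  number of points is \<open>\<lambda>\<close>.
\<close>

lemma space_eucl: "space (eucl d) = PiE {..<d} (\<lambda>_. UNIV)"
  by (simp add: eucl_def space_PiM)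

interpretation lborel_product: product_sigma_finite "\<lambda>_::nat. lborel :: real measure"
  by (simp add: product_sigma_finite_def lborel.sigma_finite_measure_axioms)

lemma fun_upd_in_space_eucl: "z \<in> space (eucl d) \<Longrightarrow> i < d \<Longrightarrow> z(i := v) \<in> space (eucl d)"
  by (auto simp: space_eucl PiE_def extensional_def)

lemma measurable_eucl_component: "i < d \<Longrightarrow> (\<lambda>z. z i) \<in> borel_measurable (eucl d)"
  unfolding eucl_def by measurable

lemma measurable_eucl_fun_upd:
  assumes i: "i < d" and f[measurable]: "f \<in> borel_measurable (eucl d)"
  shows "(\<lambda>z. z(i := f z)) \<in> eucl d \<rightarrow>\<^sub>M eucl d"
  unfolding eucl_def
  apply (rule measurable_PiM_single')
  subgoal for k using f i unfolding eucl_def by (cases "k = i") (simp_all, measurable)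
  using i by (auto simp: space_PiM PiE_def extensional_def)

lemma enorm_measurable[measurable]: "enorm d \<in> borel_measurable (eucl d)"
  unfolding enorm_def eucl_def by measurable

lemma einner_measurable[measurable]: "einner d x \<in> borel_measurable (eucl d)"
  unfolding einner_def eucl_def by measurable

lemma usphere_sets[measurable]: "usphere d \<in> sets (eucl d)"
  unfolding usphere_def by measurable

lemma cap_sets[measurable]: "cap d x \<theta> \<in> sets (eucl d)"
  unfolding cap_def by measurable

lemma emeasure_eucl_cube:
  "a \<le> b \<Longrightarrow> emeasure (eucl d) (PiE {..<d} (\<lambda>_. {a..b})) = ennreal ((b - a) ^ d)"
  unfolding eucl_def
  by (subst lborel_product.emeasure_PiM) (auto simp: prod_ennreal ennreal_power)

lemma sum_remove_two:
  assumes "finite A" "i \<in> A" "j \<in> A" "i \<noteq> j"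
  shows "sum f A = f i + f j + sum f (A - {i, j})"
proof -
  have "sum f A = f i + sum f (A - {i})" using assms by (simp add: sum.remove)
  also have "sum f (A - {i}) = f j + sum f (A - {i} - {j})" using assms by (simp add: sum.remove)
  also have "A - {i} - {j} = A - {i, j}" by auto
  finally show ?thesis by (simp add: add.assoc)
qed

section \<open>Volume-preserving maps\<close>

definition measure_preserving_eucl :: "nat \<Rightarrow> ((nat \<Rightarrow> real) \<Rightarrow> (nat \<Rightarrow> real)) \<Rightarrow> bool" where
  "measure_preserving_eucl d T \<longleftrightarrow> T \<in> eucl d \<rightarrow>\<^sub>M eucl d \<and>
     (\<forall>A\<in>sets (eucl d). emeasure (eucl d) (T -` A \<inter> space (eucl d)) = emeasure (eucl d) A)"

lemma measure_preserving_eucl_comp: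
  assumes T: "measure_preserving_eucl d T" and S: "measure_preserving_eucl d S"
  shows "measure_preserving_eucl d (S \<circ> T)"
  unfolding measure_preserving_eucl_def
proof (intro conjI ballI)
  have Tm: "T \<in> eucl d \<rightarrow>\<^sub>M eucl d" and Sm: "S \<in> eucl d \<rightarrow>\<^sub>M eucl d"
    using T S by (auto simp: measure_preserving_eucl_def)
  then show "S \<circ> T \<in> eucl d \<rightarrow>\<^sub>M eucl d" by (rule measurable_comp)
  fix A assume A: "A \<in> sets (eucl d)"
  have SA: "S -` A \<inter> space (eucl d) \<in> sets (eucl d)" using Sm A by (rule measurable_sets)
  have "(S \<circ> T) -` A \<inter> space (eucl d) = T -` (S -` A \<inter> space (eucl d)) \<inter> space (eucl d)"
    using measurable_space[OF Tm] by auto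
  also have "emeasure (eucl d) \<dots> = emeasure (eucl d) (S -` A \<inter> space (eucl d))"
    using T SA unfolding measure_preserving_eucl_def by blast
  also have "\<dots> = emeasure (eucl d) A"
    using S A by (simp add: measure_preserving_eucl_def)
  finally show "emeasure (eucl d) ((S \<circ> T) -` A \<inter> space (eucl d)) = emeasure (eucl d) A" .
qed

text \<open>Fubini in the \<open>i\<close>-th coordinate reduces this to the one-dimensional substitution
  \<open>v \<mapsto> c v + b\<close>, since \<open>b\<close> does not depend on that coordinate.\<close>
lemma emeasure_eucl_affine_coordinate:
  assumes i: "i < d" and c: "c \<noteq> 0" and b[measurable]: "b \<in> borel_measurable (eucl d)"
    and b_indep: "\<And>z v. z \<in> space (eucl d) \<Longrightarrow> b (z(i := v)) = b z"
    and A[measurable]: "A \<in> sets (eucl d)"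
  shows "emeasure (eucl d) {z \<in> space (eucl d). z(i := c * z i + b z) \<in> A} * ennreal \<bar>c\<bar>
         = emeasure (eucl d) A"
proof -
  define I' where "I' = {..<d} - {i}"
  have dI: "{..<d} = insert i I'" and iI: "i \<notin> I'" and fI: "finite I'"
    using i by (auto simp: I'_def)
  define \<phi> where "\<phi> z = z(i := c * z i + b z)" for z :: "nat \<Rightarrow> real"
  have [measurable]: "\<phi> \<in> eucl d \<rightarrow>\<^sub>M eucl d"
    unfolding \<phi>_def using i measurable_eucl_component[OF i] by (intro measurable_eucl_fun_upd) auto
  define B where "B = \<phi> -` A \<inter> space (eucl d)"
  have [measurable]: "B \<in> sets (eucl d)" unfolding B_def by measurable
  have B_eq: "{z \<in> space (eucl d). z(i := c * z i + b z) \<in> A} = B"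
    by (auto simp: B_def \<phi>_def)
  have inner: "(\<integral>\<^sup>+v. indicator B (y(i:=v)) * ennreal \<bar>c\<bar> \<partial>lborel) = (\<integral>\<^sup>+w. indicator A (y(i:=w)) \<partial>lborel)"
    if y: "y \<in> space (\<Pi>\<^sub>M k\<in>I'. (lborel::real measure))" for y
  proof -
    have yE: "y \<in> space (eucl d)" using y dI by (auto simp: space_eucl space_PiM PiE_def extensional_def)
    have ym: "(\<lambda>w. y(i := w)) \<in> lborel \<rightarrow>\<^sub>M eucl d"
      using measurable_component_update[OF y iI] unfolding eucl_def dI by simp
    have [measurable]: "(\<lambda>w. indicator A (y(i:=w)) :: ennreal) \<in> borel_measurable borel"
      using ym by measurable
    have "\<And>v. indicator B (y(i:=v)) = (indicator A (y(i:= c * v + b y)) :: ennreal)"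
      using fun_upd_in_space_eucl[OF yE i] b_indep[OF yE] by (auto simp: B_def \<phi>_def indicator_def)
    then have "(\<integral>\<^sup>+v. indicator B (y(i:=v)) * ennreal \<bar>c\<bar> \<partial>lborel)
        = (\<integral>\<^sup>+v. indicator A (y(i:= c * v + b y)) \<partial>lborel) * ennreal \<bar>c\<bar>"
      by (simp add: nn_integral_multc)
    also have "\<dots> = (\<integral>\<^sup>+w. indicator A (y(i:=w)) \<partial>lborel)"
      using nn_integral_real_affine[of "\<lambda>w. indicator A (y(i:=w)) :: ennreal" c "b y", OF _ c]
      by (simp add: mult.commute add.commute)
    finally show ?thesis .
  qed
  have "emeasure (eucl d) B * ennreal \<bar>c\<bar> = (\<integral>\<^sup>+z. indicator B z * ennreal \<bar>c\<bar> \<partial>eucl d)"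
    by (subst nn_integral_multc) (auto simp: nn_integral_indicator)
  also have "\<dots> = (\<integral>\<^sup>+y. (\<integral>\<^sup>+v. indicator B (y(i:=v)) * ennreal \<bar>c\<bar> \<partial>lborel) \<partial>(\<Pi>\<^sub>M k\<in>I'. lborel))"
    unfolding eucl_def dI
    by (rule lborel_product.product_nn_integral_insert[OF fI iI]) (simp add: dI[symmetric] eucl_def[symmetric])
  also have "\<dots> = (\<integral>\<^sup>+y. (\<integral>\<^sup>+w. indicator A (y(i:=w)) \<partial>lborel) \<partial>(\<Pi>\<^sub>M k\<in>I'. lborel))"
    by (rule nn_integral_cong) (rule inner)
  also have "\<dots> = emeasure (eucl d) A"
    unfolding nn_integral_indicator[OF A, symmetric] unfolding eucl_def dI
    by (rule lborel_product.product_nn_integral_insert[OF fI iI, symmetric])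
      (simp add: dI[symmetric] eucl_def[symmetric])
  finally show ?thesis unfolding B_eq .
qed

definition shear :: "nat \<Rightarrow> nat \<Rightarrow> real \<Rightarrow> (nat \<Rightarrow> real) \<Rightarrow> (nat \<Rightarrow> real)" where
  "shear i j a z = z(i := z i + a * z j)"

definition givens :: "nat \<Rightarrow> nat \<Rightarrow> real \<Rightarrow> real \<Rightarrow> (nat \<Rightarrow> real) \<Rightarrow> (nat \<Rightarrow> real)" where
  "givens i j c s z = z(i := c * z i - s * z j, j := s * z i + c * z j)"

lemma givens_apply:
  "i \<noteq> j \<Longrightarrow> givens i j c s z i = c * z i - s * z j"
  "givens i j c s z j = s * z i + c * z j"
  "k \<noteq> i \<Longrightarrow> k \<noteq> j \<Longrightarrow> givens i j c s z k = z k"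
  by (auto simp: givens_def)

lemma measure_preserving_eucl_shear:
  assumes "i < d" "j < d" "i \<noteq> j"
  shows "measure_preserving_eucl d (shear i j a)"
  unfolding measure_preserving_eucl_def
proof (intro conjI ballI)
  have [measurable]: "(\<lambda>z. a * z j) \<in> borel_measurable (eucl d)"
    using measurable_eucl_component[OF assms(2)] by measurable
  show "shear i j a \<in> eucl d \<rightarrow>\<^sub>M eucl d"
    unfolding shear_def using assms measurable_eucl_component[OF assms(1)]
    by (intro measurable_eucl_fun_upd) auto
  fix A assume A: "A \<in> sets (eucl d)"
  have "emeasure (eucl d) {z \<in> space (eucl d). z(i := 1 * z i + a * z j) \<in> A} * ennreal \<bar>1\<bar>
      = emeasure (eucl d) A"
    by (rule emeasure_eucl_affine_coordinate) (use assms A in auto)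
  moreover have "{z \<in> space (eucl d). z(i := 1 * z i + a * z j) \<in> A} = shear i j a -` A \<inter> space (eucl d)"
    by (auto simp: shear_def)
  ultimately show "emeasure (eucl d) (shear i j a -` A \<inter> space (eucl d)) = emeasure (eucl d) A"
    by simp
qed

text \<open>A rotation is a product of three shears; the shear parameter \<open>s / (1 + c)\<close> is the tangent
  of the half angle, hence the exclusion of \<open>c = -1\<close>.\<close>
lemma givens_eq_shears:
  assumes "i \<noteq> j" "c\<^sup>2 + s\<^sup>2 = 1" "c \<noteq> -1"
  defines "t \<equiv> s / (1 + c)"
  shows "givens i j c s = shear i j (-t) \<circ> shear j i s \<circ> shear i j (-t)"
proof
  fix z
  have c1: "1 + c \<noteq> 0" using assms(3) by linarith
  have st: "s * t = 1 - c"
  proof -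
    have "s * t = s\<^sup>2 / (1 + c)" by (simp add: t_def power2_eq_square)
    also have "\<dots> = (1 - c) * (1 + c) / (1 + c)" using assms(2) by (simp add: algebra_simps power2_eq_square)
    finally show ?thesis using c1 by simp
  qed
  have tc: "t * (1 + c) = s" using c1 by (simp add: t_def)
  have e1: "z i - t * z j - t * (z j + s * (z i - t * z j)) = c * z i - s * z j"
  proof -
    have "z i - t * z j - t * (z j + s * (z i - t * z j)) = z i * (1 - s * t) - z j * t * (2 - s * t)"
      by (simp add: algebra_simps)
    also have "\<dots> = c * z i - z j * (t * (1 + c))" unfolding st by (simp add: algebra_simps)
    finally show ?thesis unfolding tc by simp
  qed
  have "z j + s * (z i - t * z j) = s * z i + (1 - s * t) * z j" by (simp add: algebra_simps)
  then have e2: "z j + s * (z i - t * z j) = s * z i + c * z j" unfolding st by simp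
  show "givens i j c s z = (shear i j (-t) \<circ> shear j i s \<circ> shear i j (-t)) z"
    using assms(1) e1 e2 by (auto simp: shear_def givens_def fun_eq_iff)
qed

lemma measure_preserving_eucl_givens:
  assumes ij: "i < d" "j < d" "i \<noteq> j" and cs: "c\<^sup>2 + s\<^sup>2 = 1"
  shows "measure_preserving_eucl d (givens i j c s)"
proof -
  have rot: "measure_preserving_eucl d (givens i j c s)" if "c\<^sup>2 + s\<^sup>2 = 1" "c \<noteq> -1" for c s
    unfolding givens_eq_shears[OF ij(3) that]
    using ij by (intro measure_preserving_eucl_comp measure_preserving_eucl_shear) auto
  show ?thesis
  proof (cases "c = -1")
    case True
    then have "s = 0" using cs by simp
    then have "givens i j c s = givens i j 0 1 \<circ> givens i j 0 1"
      using True ij(3) by (auto simp: givens_def fun_eq_iff)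
    then show ?thesis using rot[of 0 1] by (simp add: measure_preserving_eucl_comp)
  qed (use rot cs in auto)
qed

lemma givens_in_space_eucl:
  "i < d \<Longrightarrow> j < d \<Longrightarrow> z \<in> space (eucl d) \<Longrightarrow> givens i j c s z \<in> space (eucl d)"
  by (auto simp: givens_def space_eucl PiE_def extensional_def)

lemma enorm_givens:
  assumes "i < d" "j < d" "i \<noteq> j" "c\<^sup>2 + s\<^sup>2 = 1"
  shows "enorm d (givens i j c s z) = enorm d z"
proof -
  have split: "\<And>f. (\<Sum>k<d. f k) = f i + f j + (\<Sum>k\<in>{..<d}-{i,j}. f k)"
    using assms by (intro sum_remove_two) auto
  have "(\<Sum>k\<in>{..<d}-{i,j}. (givens i j c s z k)\<^sup>2) = (\<Sum>k\<in>{..<d}-{i,j}. (z k)\<^sup>2)"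
    by (intro sum.cong) (auto simp: givens_apply)
  moreover have "(c * z i - s * z j)\<^sup>2 + (s * z i + c * z j)\<^sup>2 = (c\<^sup>2 + s\<^sup>2) * ((z i)\<^sup>2 + (z j)\<^sup>2)"
    by (simp add: algebra_simps power2_eq_square)
  ultimately show ?thesis
    unfolding enorm_def split using assms by (simp add: givens_apply)
qed

lemma einner_givens:
  assumes "i < d" "j < d" "i \<noteq> j"
  shows "einner d x (givens i j c (-s) z) = einner d (givens i j c s x) z"
proof -
  have split: "\<And>f. (\<Sum>k<d. f k) = f i + f j + (\<Sum>k\<in>{..<d}-{i,j}. f k)"
    using assms by (intro sum_remove_two) auto
  have "(\<Sum>k\<in>{..<d}-{i,j}. x k * givens i j c (-s) z k) = (\<Sum>k\<in>{..<d}-{i,j}. givens i j c s x k * z k)"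
    by (intro sum.cong) (auto simp: givens_apply)
  then show ?thesis
    unfolding einner_def split using assms by (simp add: givens_apply algebra_simps)
qed

lemma givens_in_usphere:
  "i < d \<Longrightarrow> j < d \<Longrightarrow> i \<noteq> j \<Longrightarrow> c\<^sup>2 + s\<^sup>2 = 1 \<Longrightarrow> y \<in> usphere d \<Longrightarrow> givens i j c s y \<in> usphere d"
  using givens_in_space_eucl enorm_givens by (auto simp: usphere_def)

section \<open>Normalised surface measure as normalised cone volume\<close>

definition unit_ball :: "nat \<Rightarrow> (nat \<Rightarrow> real) set" where
  "unit_ball d = {z \<in> space (eucl d). enorm d z < 1}"

definition punctured_ball :: "nat \<Rightarrow> (nat \<Rightarrow> real) set" where
  "punctured_ball d = {z \<in> space (eucl d). 0 < enorm d z \<and> enorm d z < 1}"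

definition radial_proj :: "nat \<Rightarrow> (nat \<Rightarrow> real) \<Rightarrow> (nat \<Rightarrow> real)" where
  "radial_proj d z = restrict (\<lambda>i. z i / enorm d z) {..<d}"

definition cap_cone :: "nat \<Rightarrow> (nat \<Rightarrow> real) \<Rightarrow> real \<Rightarrow> (nat \<Rightarrow> real) set" where
  "cap_cone d x \<theta> = {z \<in> punctured_ball d. cos \<theta> * enorm d z \<le> einner d x z}"

lemma unit_ball_sets[measurable]: "unit_ball d \<in> sets (eucl d)"
  unfolding unit_ball_def by measurable

lemma punctured_ball_sets[measurable]: "punctured_ball d \<in> sets (eucl d)"
  unfolding punctured_ball_def by measurable

lemma cap_cone_sets[measurable]: "cap_cone d x \<theta> \<in> sets (eucl d)"
proof -
  have "cap_cone d x \<theta> = punctured_ball d \<inter> {z \<in> space (eucl d). cos \<theta> * enorm d z \<le> einner d x z}"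
    by (auto simp: cap_cone_def punctured_ball_def)
  also have "\<dots> \<in> sets (eucl d)" by measurable
  finally show ?thesis .
qed

lemma punctured_ball_subset_unit_ball: "punctured_ball d \<subseteq> unit_ball d"
  by (auto simp: punctured_ball_def unit_ball_def)

lemma radial_proj_measurable: "radial_proj d \<in> eucl d \<rightarrow>\<^sub>M eucl d"
  unfolding eucl_def radial_proj_def
  apply (rule measurable_PiM_single')
  subgoal for k
    using enorm_measurable[of d] measurable_eucl_component[of k d]
    unfolding eucl_def by (auto intro!: borel_measurable_divide)
  by (auto simp: space_PiM PiE_def extensional_def)

lemma enorm_radial_proj: "0 < enorm d z \<Longrightarrow> enorm d (radial_proj d z) = 1"
proof -
  assume z: "0 < enorm d z"
  have "(\<Sum>i<d. (radial_proj d z i)\<^sup>2) = (\<Sum>i<d. (z i)\<^sup>2) / (enorm d z)\<^sup>2"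
    by (simp add: radial_proj_def power_divide sum_divide_distrib)
  also have "(\<Sum>i<d. (z i)\<^sup>2) = (enorm d z)\<^sup>2"
    by (simp add: enorm_def sum_nonneg)
  finally show ?thesis using z by (simp add: enorm_def)
qed

lemma einner_radial_proj: "einner d x (radial_proj d z) = einner d x z / enorm d z"
  by (simp add: einner_def radial_proj_def sum_divide_distrib)

lemma radial_proj_in_space: "radial_proj d z \<in> space (eucl d)"
  by (simp add: radial_proj_def space_eucl)

lemma sets_sphere_measure[simp, measurable_cong]: "sets (sphere_measure d) = sets (eucl d)"
  by (simp add: sphere_measure_def)

lemma space_sphere_measure[simp]: "space (sphere_measure d) = space (eucl d)"
  by (simp add: sphere_measure_def)

lemma sphere_measure_eq_distr:
  "sphere_measure d = distr (uniform_measure (eucl d) (punctured_ball d)) (eucl d) (radial_proj d)"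
  unfolding sphere_measure_def punctured_ball_def radial_proj_def ..

lemma emeasure_sphere_measure:
  assumes "A \<in> sets (eucl d)"
  shows "emeasure (sphere_measure d) A
    = emeasure (eucl d) (punctured_ball d \<inter> (radial_proj d -` A \<inter> space (eucl d)))
      / emeasure (eucl d) (punctured_ball d)"
  unfolding sphere_measure_eq_distr using assms radial_proj_measurable
  by (subst emeasure_distr) (auto intro: emeasure_uniform_measure)

lemma emeasure_cap_eq_cone:
  "emeasure (sphere_measure d) (cap d x \<theta>)
    = emeasure (eucl d) (cap_cone d x \<theta>) / emeasure (eucl d) (punctured_ball d)"
proof -
  have "punctured_ball d \<inter> (radial_proj d -` cap d x \<theta> \<inter> space (eucl d)) = cap_cone d x \<theta>"
    by (auto simp: punctured_ball_def cap_cone_def cap_def usphere_def enorm_radial_proj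
        radial_proj_in_space einner_radial_proj pos_le_divide_eq)
  then show ?thesis by (simp add: emeasure_sphere_measure)
qed

lemma emeasure_unit_ball_finite: "emeasure (eucl d) (unit_ball d) < \<infinity>"
proof -
  have "unit_ball d \<subseteq> PiE {..<d} (\<lambda>_. {-1..1})"
  proof
    fix z assume z: "z \<in> unit_ball d"
    have "\<bar>z i\<bar> \<le> 1" if i: "i < d" for i
    proof -
      have "(z i)\<^sup>2 \<le> (\<Sum>k<d. (z k)\<^sup>2)" using i by (intro member_le_sum) auto
      also have "\<dots> < 1" using z by (simp add: unit_ball_def enorm_def)
      finally show ?thesis by (simp add: abs_square_less_1 less_imp_le)
    qed
    then show "z \<in> PiE {..<d} (\<lambda>_. {-1..1})"
      using z by (auto simp: unit_ball_def space_eucl PiE_def abs_le_iff)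
  qed
  then have "emeasure (eucl d) (unit_ball d) \<le> emeasure (eucl d) (PiE {..<d} (\<lambda>_. {-1..1}))"
    by (intro emeasure_mono) (auto simp: eucl_def)
  also have "\<dots> < \<infinity>" by (subst emeasure_eucl_cube) auto
  finally show ?thesis .
qed

lemma emeasure_punctured_ball_finite: "emeasure (eucl d) (punctured_ball d) < \<infinity>"
  using emeasure_mono[OF punctured_ball_subset_unit_ball unit_ball_sets] emeasure_unit_ball_finite
  by (rule le_less_trans)

lemma emeasure_punctured_ball_pos:
  assumes d: "1 \<le> d"
  shows "0 < emeasure (eucl d) (punctured_ball d)"
proof -
  define a where "a = 1 / (4 * real d)"
  have a: "0 < a" using d by (simp add: a_def)
  have "PiE {..<d} (\<lambda>_. {a..2*a}) \<subseteq> punctured_ball d"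
  proof
    fix z assume z: "z \<in> PiE {..<d} (\<lambda>_. {a..2*a})"
    have "(\<Sum>k<d. (z k)\<^sup>2) \<le> (\<Sum>k<d. (2*a)\<^sup>2)"
      using z a by (intro sum_mono power_mono) (auto simp: PiE_def Pi_def)
    also have "\<dots> = 1 / (4 * real d)" using d by (simp add: a_def power2_eq_square)
    also have "\<dots> < 1" using d by simp
    finally have "(\<Sum>k<d. (z k)\<^sup>2) < 1" .
    moreover have "0 < (z 0)\<^sup>2" using z a d by (auto simp: PiE_def Pi_def)
    moreover have "(z 0)\<^sup>2 \<le> (\<Sum>k<d. (z k)\<^sup>2)" using d by (intro member_le_sum) auto
    ultimately have "0 < (\<Sum>k<d. (z k)\<^sup>2) \<and> (\<Sum>k<d. (z k)\<^sup>2) < 1" by linarith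
    then show "z \<in> punctured_ball d"
      using z by (auto simp: punctured_ball_def enorm_def space_eucl PiE_def)
  qed
  then have "emeasure (eucl d) (PiE {..<d} (\<lambda>_. {a..2*a})) \<le> emeasure (eucl d) (punctured_ball d)"
    by (intro emeasure_mono) auto
  moreover have "emeasure (eucl d) (PiE {..<d} (\<lambda>_. {a..2*a})) = ennreal (a ^ d)"
    using a by (subst emeasure_eucl_cube) auto
  ultimately show ?thesis using a by (metis ennreal_eq_0_iff not_gr_zero order_le_less_trans
        zero_less_power linorder_not_le order.strict_trans1)
qed

lemma prob_space_sphere_measure: "1 \<le> d \<Longrightarrow> prob_space (sphere_measure d)"
  unfolding sphere_measure_eq_distr
  using emeasure_punctured_ball_pos[of d] emeasure_punctured_ball_finite[of d] radial_proj_measurable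
  by (intro prob_space.prob_space_distr prob_space_uniform_measure) auto

lemma AE_sphere_measure_usphere: "AE x in sphere_measure d. x \<in> usphere d"
proof (rule AE_I[where N = "space (eucl d) - usphere d"])
  have "punctured_ball d \<inter> (radial_proj d -` (space (eucl d) - usphere d) \<inter> space (eucl d)) = {}"
    by (auto simp: punctured_ball_def usphere_def enorm_radial_proj radial_proj_in_space)
  then show "emeasure (sphere_measure d) (space (eucl d) - usphere d) = 0"
    by (subst emeasure_sphere_measure) auto
qed auto

section \<open>Rotation invariance of the cap measure\<close>

definition pole :: "nat \<Rightarrow> nat \<Rightarrow> real" where
  "pole d = restrict (\<lambda>i. if i = 0 then 1 else 0) {..<d}"

lemma emeasure_cap_cone_givens:
  assumes ij: "i < d" "j < d" "i \<noteq> j" and cs: "c\<^sup>2 + s\<^sup>2 = 1"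
  shows "emeasure (eucl d) (cap_cone d (givens i j c s x) \<theta>) = emeasure (eucl d) (cap_cone d x \<theta>)"
proof -
  have T: "measure_preserving_eucl d (givens i j c (-s))"
    using assms by (intro measure_preserving_eucl_givens) auto
  have "givens i j c (-s) -` cap_cone d x \<theta> \<inter> space (eucl d) = cap_cone d (givens i j c s x) \<theta>"
    using ij cs givens_in_space_eucl[OF ij(1,2)] enorm_givens[OF ij, of c "-s"] einner_givens[OF ij]
    by (auto simp: cap_cone_def punctured_ball_def)
  then show ?thesis using T cap_cone_sets unfolding measure_preserving_eucl_def by metis
qed

text \<open>Givens rotations in the planes \<open>(0, 1), \<dots>, (0, m)\<close> clear the coordinates \<open>1, \<dots>, m\<close>
  of the centre one at a time.\<close>
lemma emeasure_cap_cone_rotate_prefix: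
  assumes d: "2 \<le> d" and x: "x \<in> usphere d" and m: "m \<le> d - 1"
  shows "\<exists>y\<in>usphere d. emeasure (eucl d) (cap_cone d x \<theta>) = emeasure (eucl d) (cap_cone d y \<theta>) \<and>
           (\<forall>k. 1 \<le> k \<and> k \<le> m \<longrightarrow> y k = 0) \<and> (1 \<le> m \<longrightarrow> 0 \<le> y 0)"
  using m
proof (induction m)
  case 0
  then show ?case using x by auto
next
  case (Suc m)
  then obtain y where y: "y \<in> usphere d"
    "emeasure (eucl d) (cap_cone d x \<theta>) = emeasure (eucl d) (cap_cone d y \<theta>)"
    "\<forall>k. 1 \<le> k \<and> k \<le> m \<longrightarrow> y k = 0"
    by auto
  define j where "j = Suc m"
  have j: "j < d" "0 < d" "0 \<noteq> j" using Suc.prems d by (auto simp: j_def)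
  show ?case
  proof (cases "y 0 = 0 \<and> y j = 0")
    case True
    then show ?thesis using y by (intro bexI[OF _ y(1)]) (auto simp: j_def le_Suc_eq)
  next
    case False
    define r where "r = sqrt ((y 0)\<^sup>2 + (y j)\<^sup>2)"
    have r: "0 < r" using False by (simp add: r_def add_pos_pos sum_power2_gt_zero_iff)
    have r2: "r\<^sup>2 = (y 0)\<^sup>2 + (y j)\<^sup>2" unfolding r_def by simp
    define c where "c = y 0 / r"
    define s where "s = - y j / r"
    have "c\<^sup>2 + s\<^sup>2 = ((y 0)\<^sup>2 + (y j)\<^sup>2) / r\<^sup>2"
      by (simp add: c_def s_def power_divide add_divide_distrib)
    then have cs: "c\<^sup>2 + s\<^sup>2 = 1" using r by (simp add: r2[symmetric])
    define y' where "y' = givens 0 j c s y"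
    have y'0: "y' 0 = r"
      using j r r2 by (simp add: y'_def givens_apply c_def s_def power2_eq_square field_simps)
    have "y' \<in> usphere d" unfolding y'_def using j cs y(1) by (intro givens_in_usphere) auto
    moreover have "emeasure (eucl d) (cap_cone d x \<theta>) = emeasure (eucl d) (cap_cone d y' \<theta>)"
      unfolding y(2) y'_def using j cs by (intro emeasure_cap_cone_givens[symmetric]) auto
    moreover have "\<forall>k. 1 \<le> k \<and> k \<le> Suc m \<longrightarrow> y' k = 0"
      using y(3) j by (auto simp: y'_def givens_apply le_Suc_eq j_def c_def s_def algebra_simps)
    ultimately show ?thesis using y'0 r by (intro bexI[of _ y']) auto
  qed
qed

lemma emeasure_cap_cone_eq_pole:
  assumes d: "2 \<le> d" and x: "x \<in> usphere d"
  shows "emeasure (eucl d) (cap_cone d x \<theta>) = emeasure (eucl d) (cap_cone d (pole d) \<theta>)"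
proof -
  obtain y where y: "y \<in> usphere d"
    "emeasure (eucl d) (cap_cone d x \<theta>) = emeasure (eucl d) (cap_cone d y \<theta>)"
    "\<forall>k. 1 \<le> k \<and> k \<le> d - 1 \<longrightarrow> y k = 0" "0 \<le> y 0"
    using emeasure_cap_cone_rotate_prefix[OF d x order.refl, of \<theta>] d by auto
  have "(\<Sum>k<d. (y k)\<^sup>2) = (y 0)\<^sup>2 + (\<Sum>k\<in>{..<d}-{0}. (y k)\<^sup>2)"
    using d by (subst sum.remove[of _ 0]) auto
  also have "(\<Sum>k\<in>{..<d}-{0}. (y k)\<^sup>2) = 0"
  proof (intro sum.neutral ballI)
    fix k assume "k \<in> {..<d}-{0}"
    then have "1 \<le> k \<and> k \<le> d - 1" by auto
    then show "(y k)\<^sup>2 = 0" using y(3) by simp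
  qed
  finally have "sqrt ((y 0)\<^sup>2) = 1" using y(1) by (simp add: usphere_def enorm_def)
  then have "y 0 = 1" using y(4) by simp
  then have "y = pole d"
    using y(1,3) by (auto simp: fun_eq_iff pole_def usphere_def space_eucl PiE_def extensional_def)
  then show ?thesis using y(2) by simp
qed

lemma measure_cap_eq_sd:
  assumes "2 \<le> d" and "x \<in> usphere d"
  shows "measure (sphere_measure d) (cap d x \<theta>) = sd d \<theta>"
  using emeasure_cap_cone_eq_pole[OF assms, of \<theta>]
  by (simp add: sd_def measure_def emeasure_cap_eq_cone pole_def)

section \<open>A lower bound for the cap measure\<close>

text \<open>Only the first \<open>k\<close> coordinates are dilated, so that the scaling law below can be proved
  one coordinate at a time.\<close>
definition dilation :: "nat \<Rightarrow> nat \<Rightarrow> (nat \<Rightarrow> real) \<Rightarrow> real \<Rightarrow> (nat \<Rightarrow> real) \<Rightarrow> (nat \<Rightarrow> real)" where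
  "dilation d k a \<rho> z = restrict (\<lambda>i. if i < k then (z i - a i) / \<rho> else z i) {..<d}"

lemma dilation_measurable: "dilation d k a \<rho> \<in> eucl d \<rightarrow>\<^sub>M eucl d"
  unfolding eucl_def dilation_def
  apply (rule measurable_PiM_single')
  subgoal for i
    using measurable_eucl_component[of i d]
    unfolding eucl_def by (cases "i < k") (auto intro!: borel_measurable_divide borel_measurable_diff)
  by (auto simp: space_PiM PiE_def extensional_def)

lemma emeasure_dilation_preimage:
  assumes k: "k \<le> d" and \<rho>: "0 < \<rho>" and A: "A \<in> sets (eucl d)"
  shows "emeasure (eucl d) (dilation d k a \<rho> -` A \<inter> space (eucl d)) = ennreal (\<rho> ^ k) * emeasure (eucl d) A"
  using k
proof (induction k)
  case 0
  have "\<And>z. z \<in> space (eucl d) \<Longrightarrow> dilation d 0 a \<rho> z = z"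
    by (auto simp: dilation_def space_eucl PiE_def extensional_def fun_eq_iff)
  then have "dilation d 0 a \<rho> -` A \<inter> space (eucl d) = A"
    using sets.sets_into_space[OF A] by auto
  then show ?case by simp
next
  case (Suc k)
  have kd: "k < d" using Suc.prems by simp
  define B where "B = dilation d k a \<rho> -` A \<inter> space (eucl d)"
  have B: "B \<in> sets (eucl d)" unfolding B_def using dilation_measurable A by (rule measurable_sets)
  have "emeasure (eucl d) {z \<in> space (eucl d). z(k := (1/\<rho>) * z k + (- a k / \<rho>)) \<in> B} * ennreal \<bar>1/\<rho>\<bar>
      = emeasure (eucl d) B"
    using kd \<rho> B by (intro emeasure_eucl_affine_coordinate) auto
  moreover have "{z \<in> space (eucl d). z(k := (1/\<rho>) * z k + (- a k / \<rho>)) \<in> B}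
      = dilation d (Suc k) a \<rho> -` A \<inter> space (eucl d)"
  proof -
    have "\<And>z. dilation d k a \<rho> (z(k := (1/\<rho>) * z k + (- a k / \<rho>))) = dilation d (Suc k) a \<rho> z"
      by (auto simp: dilation_def fun_eq_iff diff_divide_distrib less_Suc_eq)
    then show ?thesis using fun_upd_in_space_eucl[OF _ kd] by (auto simp: B_def)
  qed
  ultimately have eq: "emeasure (eucl d) (dilation d (Suc k) a \<rho> -` A \<inter> space (eucl d)) * ennreal (1/\<rho>)
      = ennreal (\<rho> ^ k) * emeasure (eucl d) A"
    using Suc.IH kd \<rho> by (simp add: B_def)
  have "emeasure (eucl d) (dilation d (Suc k) a \<rho> -` A \<inter> space (eucl d))
      = emeasure (eucl d) (dilation d (Suc k) a \<rho> -` A \<inter> space (eucl d)) * ennreal (1/\<rho>) * ennreal \<rho>"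
    using \<rho> by (simp add: mult.assoc ennreal_mult[symmetric])
  also have "\<dots> = ennreal (\<rho> ^ Suc k) * emeasure (eucl d) A"
    unfolding eq using \<rho> by (simp add: ennreal_mult mult_ac)
  finally show ?case .
qed

text \<open>The ball of radius \<open>\<rho> = (1 - c) / 4\<close> about \<open>e\<^sub>0 / 2\<close>, written in coordinates
  \<open>z = (z\<^sub>0, z')\<close> with \<open>R = |z'|\<^sup>2\<close>, lies in the cone \<open>c |z| \<le> z\<^sub>0\<close> inside the unit ball:
  by the triangle inequality \<open>|z| < 1/2 + \<rho>\<close>, while \<open>z\<^sub>0 > 1/2 - \<rho> \<ge> c (1/2 + \<rho>)\<close>, the
  last step being \<open>(1 - c)\<^sup>2 \<ge> 0\<close>.\<close>
lemma ball_in_cone_coordinates: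
  fixes c z0 R :: real
  assumes c: "-1 \<le> c" "c < 1" and R: "0 \<le> R" and ball: "(z0 - 1/2)\<^sup>2 + R < ((1 - c) / 4)\<^sup>2"
  shows "0 < sqrt (z0\<^sup>2 + R)" "sqrt (z0\<^sup>2 + R) < 1" "c * sqrt (z0\<^sup>2 + R) \<le> z0"
proof -
  define \<rho> where "\<rho> = (1 - c) / 4"
  have \<rho>: "0 < \<rho>" "\<rho> \<le> 1/2" using c by (auto simp: \<rho>_def)
  have dist: "sqrt ((z0 - 1/2)\<^sup>2 + R) < \<rho>"
    using ball \<rho> real_sqrt_less_mono[of "(z0 - 1/2)\<^sup>2 + R" "\<rho>\<^sup>2"] by (simp add: \<rho>_def)
  have "\<bar>z0 - 1/2\<bar> \<le> sqrt ((z0 - 1/2)\<^sup>2 + R)"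
    using R real_sqrt_le_mono[of "(z0 - 1/2)\<^sup>2" "(z0 - 1/2)\<^sup>2 + R"] by simp
  then have z0: "1/2 - \<rho> < z0" using dist by linarith
  have "sqrt (z0\<^sup>2 + R) = sqrt (((z0 - 1/2) + 1/2)\<^sup>2 + (sqrt R + 0)\<^sup>2)" using R by simp
  also have "\<dots> \<le> sqrt ((z0 - 1/2)\<^sup>2 + (sqrt R)\<^sup>2) + sqrt ((1/2)\<^sup>2 + 0\<^sup>2)"
    by (rule real_sqrt_sum_squares_triangle_ineq)
  finally have norm: "sqrt (z0\<^sup>2 + R) < 1/2 + \<rho>" using R dist by simp
  have "0 < z0" using z0 \<rho> by linarith
  then show "0 < sqrt (z0\<^sup>2 + R)" using R by (simp add: add_pos_nonneg)
  show "sqrt (z0\<^sup>2 + R) < 1" using norm \<rho> by linarith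
  have "c * (1/2 + \<rho>) = (1/2 - \<rho>) - (1 - c)\<^sup>2 / 4"
    by (simp add: \<rho>_def power2_eq_square field_simps)
  then have key: "c * (1/2 + \<rho>) \<le> 1/2 - \<rho>" by simp
  show "c * sqrt (z0\<^sup>2 + R) \<le> z0"
  proof (cases "0 \<le> c")
    case True
    then have "c * sqrt (z0\<^sup>2 + R) \<le> c * (1/2 + \<rho>)" using norm by (intro mult_left_mono) auto
    then show ?thesis using key z0 by linarith
  next
    case False
    then have "c * sqrt (z0\<^sup>2 + R) \<le> 0" using R by (intro mult_nonpos_nonneg) auto
    then show ?thesis using \<open>0 < z0\<close> by linarith
  qed
qed

lemma ball_subset_cap_cone:
  assumes d: "1 \<le> d" and c: "cos \<theta> < 1"
  shows "dilation d d (\<lambda>i. if i = 0 then 1/2 else 0) ((1 - cos \<theta>) / 4) -` unit_ball d \<inter> space (eucl d)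
    \<subseteq> cap_cone d (pole d) \<theta>"
    (is "?T -` _ \<inter> _ \<subseteq> _")
proof
  fix z assume z: "z \<in> ?T -` unit_ball d \<inter> space (eucl d)"
  define \<rho> where "\<rho> = (1 - cos \<theta>) / 4"
  have \<rho>: "0 < \<rho>" using c by (simp add: \<rho>_def)
  define R where "R = (\<Sum>i\<in>{..<d}-{0}. (z i)\<^sup>2)"
  have R: "0 \<le> R" unfolding R_def by (intro sum_nonneg) auto
  have d0: "0 \<in> {..<d}" using d by auto
  have "(\<Sum>i<d. (?T z i)\<^sup>2) = (\<Sum>i<d. (if i = 0 then (z 0 - 1/2) / \<rho> else z i / \<rho>)\<^sup>2)"
    by (intro sum.cong) (auto simp: dilation_def \<rho>_def)
  also have "\<dots> = ((z 0 - 1/2) / \<rho>)\<^sup>2 + (\<Sum>i\<in>{..<d}-{0}. (z i / \<rho>)\<^sup>2)"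
    using d0 by (subst sum.remove[of _ 0]) auto
  also have "\<dots> = ((z 0 - 1/2)\<^sup>2 + R) / \<rho>\<^sup>2"
    by (simp add: R_def power_divide sum_divide_distrib add_divide_distrib)
  finally have "((z 0 - 1/2)\<^sup>2 + R) / \<rho>\<^sup>2 < 1"
    using z by (simp add: unit_ball_def enorm_def)
  then have ball: "(z 0 - 1/2)\<^sup>2 + R < ((1 - cos \<theta>) / 4)\<^sup>2"
    using \<rho> by (simp add: divide_less_eq \<rho>_def)
  have "enorm d z = sqrt ((z 0)\<^sup>2 + R)"
    unfolding enorm_def R_def using d0 by (subst sum.remove[of _ 0]) auto
  moreover have "einner d (pole d) z = z 0"
    unfolding einner_def using d0 by (subst sum.remove[of _ 0]) (auto simp: pole_def)
  ultimately show "z \<in> cap_cone d (pole d) \<theta>"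
    using ball_in_cone_coordinates[OF cos_ge_minus_one c R ball] z
    by (simp add: cap_cone_def punctured_ball_def)
qed

lemma sd_ge_power:
  assumes d: "1 \<le> d" and c: "cos \<theta> < 1"
  shows "((1 - cos \<theta>) / 4) ^ d \<le> sd d \<theta>"
proof -
  define \<rho> where "\<rho> = (1 - cos \<theta>) / 4"
  define a where "a = (\<lambda>i::nat. if i = 0 then 1/2 else (0::real))"
  have \<rho>: "0 < \<rho>" using c by (simp add: \<rho>_def)
  define ball where "ball = dilation d d a \<rho> -` unit_ball d \<inter> space (eucl d)"
  have "ennreal (\<rho> ^ d) * emeasure (eucl d) (punctured_ball d) \<le> ennreal (\<rho> ^ d) * emeasure (eucl d) (unit_ball d)"
    by (intro mult_left_mono emeasure_mono punctured_ball_subset_unit_ball) auto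
  also have "\<dots> = emeasure (eucl d) ball"
    unfolding ball_def using \<rho> by (intro emeasure_dilation_preimage[symmetric]) auto
  also have "\<dots> \<le> emeasure (eucl d) (cap_cone d (pole d) \<theta>)"
    unfolding ball_def a_def \<rho>_def using ball_subset_cap_cone[OF d c] by (rule emeasure_mono) simp
  finally have le: "ennreal (\<rho> ^ d) * emeasure (eucl d) (punctured_ball d) \<le> emeasure (eucl d) (cap_cone d (pole d) \<theta>)" .
  have cone_ball: "cap_cone d (pole d) \<theta> \<subseteq> punctured_ball d" by (auto simp: cap_cone_def)
  have fB: "emeasure (eucl d) (punctured_ball d) = ennreal (measure (eucl d) (punctured_ball d))"
    using emeasure_punctured_ball_finite[of d] by (intro emeasure_eq_ennreal_measure) auto
  have fK: "emeasure (eucl d) (cap_cone d (pole d) \<theta>) = ennreal (measure (eucl d) (cap_cone d (pole d) \<theta>))"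
    using emeasure_punctured_ball_finite[of d] emeasure_mono[OF cone_ball punctured_ball_sets]
    by (intro emeasure_eq_ennreal_measure) auto
  have mB: "0 < measure (eucl d) (punctured_ball d)" using emeasure_punctured_ball_pos[OF d] fB by simp
  have "\<rho> ^ d * measure (eucl d) (punctured_ball d) \<le> measure (eucl d) (cap_cone d (pole d) \<theta>)"
    using le unfolding fB fK using \<rho> by (simp add: ennreal_mult[symmetric] ennreal_le_iff)
  moreover have "sd d \<theta> = enn2real (emeasure (eucl d) (cap_cone d (pole d) \<theta>) / emeasure (eucl d) (punctured_ball d))"
    unfolding sd_def measure_def emeasure_cap_eq_cone pole_def ..
  then have "sd d \<theta> = measure (eucl d) (cap_cone d (pole d) \<theta>) / measure (eucl d) (punctured_ball d)"
    unfolding fB fK using mB by (simp add: divide_ennreal)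
  ultimately show ?thesis using mB unfolding \<rho>_def by (simp add: le_divide_eq)
qed

section \<open>An exponential moment bound for a fixed number of points\<close>

lemma sd_nonneg: "0 \<le> sd d \<theta>"
  by (simp add: sd_def)

text \<open>This agrees with \<open>indicator (cap d x \<theta>) y\<close> on \<open>space (eucl d)\<close>, but is visibly
  measurable jointly in \<open>x\<close> and \<open>y\<close>.\<close>
definition cap_indicator :: "nat \<Rightarrow> real \<Rightarrow> (nat \<Rightarrow> real) \<Rightarrow> (nat \<Rightarrow> real) \<Rightarrow> real" where
  "cap_indicator d \<theta> x y = (if enorm d y = 1 \<and> cos \<theta> \<le> einner d x y then 1 else 0)"

lemma cap_indicator_eq_indicator:
  "y \<in> space (eucl d) \<Longrightarrow> cap_indicator d \<theta> x y = indicator (cap d x \<theta>) y"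
  by (auto simp: cap_indicator_def cap_def usphere_def indicator_def)

lemma cap_indicator_measurable[measurable]: "cap_indicator d \<theta> x \<in> borel_measurable (sphere_measure d)"
proof -
  have "(\<lambda>v. indicator (cap d x \<theta>) v :: real) \<in> borel_measurable (sphere_measure d)"
    by (intro borel_measurable_indicator) simp
  then show ?thesis
    by (rule measurable_cong[THEN iffD1, rotated]) (simp add: cap_indicator_eq_indicator)
qed

lemma measurable_cap_indicator_pair:
  "(\<lambda>p. cap_indicator d \<theta> (fst p) (snd p)) \<in> borel_measurable (sphere_measure d \<Otimes>\<^sub>M sphere_measure d)"
proof -
  have S: "sets (sphere_measure d \<Otimes>\<^sub>M sphere_measure d)
      = sets ((\<Pi>\<^sub>M i\<in>{..<d}. lborel) \<Otimes>\<^sub>M (\<Pi>\<^sub>M i\<in>{..<d}. (lborel::real measure)))"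
    by (rule sets_pair_measure_cong) (simp_all only: sets_sphere_measure eucl_def)
  show ?thesis
    unfolding cap_indicator_def enorm_def einner_def measurable_cong_sets[OF S refl] by measurable
qed

lemma measurable_cap_indicator_components:
  assumes "j \<in> I" "k \<in> I"
  shows "(\<lambda>xs. cap_indicator d \<theta> (xs j) (xs k)) \<in> borel_measurable (\<Pi>\<^sub>M i\<in>I. sphere_measure d)"
proof -
  have "(\<lambda>xs. (xs j, xs k)) \<in> (\<Pi>\<^sub>M i\<in>I. sphere_measure d) \<rightarrow>\<^sub>M sphere_measure d \<Otimes>\<^sub>M sphere_measure d"
    using assms by (intro measurable_Pair measurable_component_singleton)
  from measurable_comp[OF this measurable_cap_indicator_pair] show ?thesis
    by (simp add: comp_def)
qed

lemma nn_integral_exp_cap_indicator: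
  assumes d: "2 \<le> d" and y: "y \<in> usphere d" and u: "0 \<le> u"
  shows "(\<integral>\<^sup>+v. ennreal (exp (u * cap_indicator d \<theta> y v)) \<partial>sphere_measure d)
       = ennreal (1 + sd d \<theta> * (exp u - 1))"
proof -
  interpret M: prob_space "sphere_measure d" using prob_space_sphere_measure d by simp
  have eu: "0 \<le> exp u - 1" using u by simp
  have "(\<integral>\<^sup>+v. ennreal (exp (u * cap_indicator d \<theta> y v)) \<partial>sphere_measure d)
      = (\<integral>\<^sup>+v. 1 + ennreal (exp u - 1) * indicator (cap d y \<theta>) v \<partial>sphere_measure d)"
  proof (intro nn_integral_cong)
    fix v assume v: "v \<in> space (sphere_measure d)"
    have "ennreal (exp u) = 1 + ennreal (exp u - 1)"
      using ennreal_plus[of 1 "exp u - 1"] eu by simp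
    then show "ennreal (exp (u * cap_indicator d \<theta> y v)) = 1 + ennreal (exp u - 1) * indicator (cap d y \<theta>) v"
      using v by (auto simp: cap_indicator_eq_indicator indicator_def)
  qed
  also have "\<dots> = 1 + ennreal (exp u - 1) * emeasure (sphere_measure d) (cap d y \<theta>)"
    by (subst nn_integral_add) (auto simp: M.emeasure_space_1[simplified] nn_integral_cmult_indicator)
  also have "\<dots> = ennreal (1 + sd d \<theta> * (exp u - 1))"
    using eu sd_nonneg[of d \<theta>] measure_cap_eq_sd[OF d y, of \<theta>]
    by (simp add: M.emeasure_eq_measure ennreal_mult ennreal_plus mult.commute)
  finally show ?thesis .
qed

lemma nn_integral_prod_exp_cap_indicator:
  fixes J :: "'i set"
  assumes d: "2 \<le> d" and y: "y \<in> usphere d" and u: "0 \<le> u" and J: "finite J"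
  shows "(\<integral>\<^sup>+x. (\<Prod>k\<in>J. ennreal (exp (u * cap_indicator d \<theta> y (x k)))) \<partial>(\<Pi>\<^sub>M k\<in>J. sphere_measure d))
       = ennreal ((1 + sd d \<theta> * (exp u - 1)) ^ card J)"
proof -
  interpret M: prob_space "sphere_measure d" using prob_space_sphere_measure d by simp
  interpret PS: product_sigma_finite "\<lambda>_::'i. sphere_measure d"
    by (simp add: product_sigma_finite_def M.sigma_finite_measure_axioms)
  have "(\<integral>\<^sup>+x. (\<Prod>k\<in>J. ennreal (exp (u * cap_indicator d \<theta> y (x k)))) \<partial>(\<Pi>\<^sub>M k\<in>J. sphere_measure d))
      = (\<Prod>k\<in>J. \<integral>\<^sup>+v. ennreal (exp (u * cap_indicator d \<theta> y v)) \<partial>sphere_measure d)"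
    by (rule PS.product_nn_integral_prod[OF J]) measurable
  also have "\<dots> = ennreal ((1 + sd d \<theta> * (exp u - 1)) ^ card J)"
  proof -
    have "0 \<le> 1 + sd d \<theta> * (exp u - 1)" using u sd_nonneg[of d \<theta>] by simp
    then show ?thesis
      by (simp only: nn_integral_exp_cap_indicator[OF d y u] prod_constant ennreal_power)
  qed
  finally show ?thesis .
qed

lemma measurable_prod_exp_cap_indicator:
  fixes I :: "'i set"
  assumes j: "j \<in> I"
  shows "(\<lambda>xs. \<Prod>k\<in>I-{j}. ennreal (exp (u * cap_indicator d \<theta> (xs j) (xs k))))
    \<in> borel_measurable (\<Pi>\<^sub>M k\<in>I. sphere_measure d)"
proof (rule borel_measurable_prod_ennreal)
  fix k assume "k \<in> I - {j}"
  then have [measurable]: "(\<lambda>xs. cap_indicator d \<theta> (xs j) (xs k)) \<in> borel_measurable (\<Pi>\<^sub>M k\<in>I. sphere_measure d)"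
    using j by (intro measurable_cap_indicator_components) auto
  show "(\<lambda>xs. ennreal (exp (u * cap_indicator d \<theta> (xs j) (xs k)))) \<in> borel_measurable (\<Pi>\<^sub>M k\<in>I. sphere_measure d)"
    by measurable
qed

text \<open>Given the point \<open>xs j\<close>, which lies on the sphere almost surely, the remaining factors
  are independent.\<close>
lemma nn_integral_exp_cap_moment:
  fixes I :: "'i set"
  assumes d: "2 \<le> d" and u: "0 \<le> u" and I: "finite I" and j: "j \<in> I"
  shows "(\<integral>\<^sup>+xs. (\<Prod>k\<in>I-{j}. ennreal (exp (u * cap_indicator d \<theta> (xs j) (xs k)))) \<partial>(\<Pi>\<^sub>M k\<in>I. sphere_measure d))
       = ennreal ((1 + sd d \<theta> * (exp u - 1)) ^ (card I - 1))"
proof -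
  define M where "M = sphere_measure d"
  define J where "J = I - {j}"
  interpret M: prob_space M unfolding M_def using prob_space_sphere_measure d by simp
  interpret PS: product_sigma_finite "\<lambda>_::'i. M"
    by (simp add: product_sigma_finite_def M.sigma_finite_measure_axioms)
  have IJ: "I = insert j J" and jJ: "j \<notin> J" and fJ: "finite J" using j I by (auto simp: J_def)
  define F where "F xs = (\<Prod>k\<in>J. ennreal (exp (u * cap_indicator d \<theta> (xs j) (xs k))))" for xs
  have "F \<in> borel_measurable (\<Pi>\<^sub>M k\<in>I. M)"
    unfolding F_def J_def M_def using j by (rule measurable_prod_exp_cap_indicator)
  then have "(\<integral>\<^sup>+xs. F xs \<partial>(\<Pi>\<^sub>M k\<in>I. M)) = (\<integral>\<^sup>+y. (\<integral>\<^sup>+x. F (x(j := y)) \<partial>(\<Pi>\<^sub>M k\<in>J. M)) \<partial>M)"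
    unfolding IJ by (rule PS.product_nn_integral_insert_rev[OF fJ jJ])
  also have "\<dots> = (\<integral>\<^sup>+y. ennreal ((1 + sd d \<theta> * (exp u - 1)) ^ card J) \<partial>M)"
  proof (rule nn_integral_cong_AE)
    show "AE y in M. (\<integral>\<^sup>+x. F (x(j := y)) \<partial>(\<Pi>\<^sub>M k\<in>J. M)) = ennreal ((1 + sd d \<theta> * (exp u - 1)) ^ card J)"
      using AE_sphere_measure_usphere unfolding M_def
    proof (rule AE_mp, intro AE_I2 impI)
      fix y assume y: "y \<in> usphere d"
      have "\<And>x. F (x(j := y)) = (\<Prod>k\<in>J. ennreal (exp (u * cap_indicator d \<theta> y (x k))))"
        unfolding F_def using jJ by (intro prod.cong) auto
      then show "(\<integral>\<^sup>+x. F (x(j := y)) \<partial>(\<Pi>\<^sub>M k\<in>J. sphere_measure d)) = ennreal ((1 + sd d \<theta> * (exp u - 1)) ^ card J)"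
        using nn_integral_prod_exp_cap_indicator[OF d y u fJ] by simp
    qed
  qed
  also have "\<dots> = ennreal ((1 + sd d \<theta> * (exp u - 1)) ^ (card I - 1))"
    using j I by (simp add: M.emeasure_space_1 J_def)
  finally show ?thesis unfolding F_def J_def M_def .
qed

lemma cap_count_le_cap_indicator_sum:
  assumes j: "j < n" and xs: "\<And>k. k < n \<Longrightarrow> xs k \<in> space (eucl d)"
  shows "real (cap_count d \<theta> n xs j) \<le> 1 + (\<Sum>k\<in>{..<n}-{j}. cap_indicator d \<theta> (xs j) (xs k))"
proof -
  have "{k \<in> {..<n}. xs k \<in> cap d (xs j) \<theta>} \<subseteq> insert j {k \<in> {..<n}-{j}. xs k \<in> cap d (xs j) \<theta>}"
    by auto
  then have "cap_count d \<theta> n xs j \<le> card (insert j {k \<in> {..<n}-{j}. xs k \<in> cap d (xs j) \<theta>})"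
    unfolding cap_count_def by (intro card_mono) auto
  also have "\<dots> \<le> Suc (card {k \<in> {..<n}-{j}. xs k \<in> cap d (xs j) \<theta>})"
    by (rule card_insert_le_m1) auto
  finally have "real (cap_count d \<theta> n xs j) \<le> 1 + real (card {k \<in> {..<n}-{j}. xs k \<in> cap d (xs j) \<theta>})"
    by linarith
  also have "real (card {k \<in> {..<n}-{j}. xs k \<in> cap d (xs j) \<theta>}) = (\<Sum>k\<in>{..<n}-{j}. indicator (cap d (xs j) \<theta>) (xs k))"
    by (simp add: indicator_def sum.If_cases Int_def conj_commute)
  also have "\<dots> = (\<Sum>k\<in>{..<n}-{j}. cap_indicator d \<theta> (xs j) (xs k))"
    using xs by (intro sum.cong) (auto simp: cap_indicator_eq_indicator)
  finally show ?thesis .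
qed

text \<open>The exponential Markov inequality, pointwise.\<close>
lemma exp_moment_ge_1_if_heavy:
  assumes u: "0 \<le> u" and j: "j < n" and xs: "\<And>k. k < n \<Longrightarrow> xs k \<in> space (eucl d)"
    and heavy: "t \<le> real (cap_count d \<theta> n xs j)"
  shows "1 \<le> ennreal (exp (u * (1 - t))) * (\<Prod>k\<in>{..<n}-{j}. ennreal (exp (u * cap_indicator d \<theta> (xs j) (xs k))))"
proof -
  let ?S = "\<Sum>k\<in>{..<n}-{j}. cap_indicator d \<theta> (xs j) (xs k)"
  have "t \<le> 1 + ?S" using cap_count_le_cap_indicator_sum[where xs = xs and \<theta> = \<theta>, OF j xs] heavy by linarith
  then have "1 \<le> exp (u * (1 - t + ?S))" using u by simp
  also have "\<dots> = exp (u * (1 - t)) * (\<Prod>k\<in>{..<n}-{j}. exp (u * cap_indicator d \<theta> (xs j) (xs k)))"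
    by (simp add: distrib_left sum_distrib_left exp_add exp_sum)
  finally have "ennreal 1 \<le> ennreal (exp (u * (1 - t)) * (\<Prod>k\<in>{..<n}-{j}. exp (u * cap_indicator d \<theta> (xs j) (xs k))))"
    by (rule ennreal_leI)
  then show ?thesis by (simp add: ennreal_mult prod_nonneg prod_ennreal)
qed

lemma nn_integral_heavy_count_le:
  assumes d: "2 \<le> d" and u: "0 \<le> u"
  shows "(\<integral>\<^sup>+xs. of_nat (card {j \<in> {..<n}. t \<le> real (cap_count d \<theta> n xs j)}) \<partial>(\<Pi>\<^sub>M k\<in>{..<n}. sphere_measure d))
     \<le> ennreal (real n * exp (u * (1 - t)) * (1 + sd d \<theta> * (exp u - 1)) ^ (n - 1))"
proof -
  define P where "P = (\<Pi>\<^sub>M k\<in>{..<n}. sphere_measure d)"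
  define C where "C = exp (u * (1 - t))"
  define G where "G j xs = ennreal C * (\<Prod>k\<in>{..<n}-{j}. ennreal (exp (u * cap_indicator d \<theta> (xs j) (xs k))))"
    for j xs
  have F_measurable:
    "(\<lambda>xs. \<Prod>k\<in>{..<n}-{j}. ennreal (exp (u * cap_indicator d \<theta> (xs j) (xs k)))) \<in> borel_measurable P"
    if "j < n" for j
    unfolding P_def using that by (intro measurable_prod_exp_cap_indicator) simp
  have G_integral: "(\<integral>\<^sup>+xs. G j xs \<partial>P) = ennreal C * ennreal ((1 + sd d \<theta> * (exp u - 1)) ^ (n - 1))"
    if j: "j < n" for j
    unfolding G_def nn_integral_cmult[OF F_measurable[OF j]] unfolding P_def
    using j by (simp add: nn_integral_exp_cap_moment[OF d u])
  have "(\<integral>\<^sup>+xs. of_nat (card {j \<in> {..<n}. t \<le> real (cap_count d \<theta> n xs j)}) \<partial>P)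
      \<le> (\<integral>\<^sup>+xs. (\<Sum>j<n. G j xs) \<partial>P)"
  proof (rule nn_integral_mono)
    fix xs assume "xs \<in> space P"
    then have xs: "\<And>k. k < n \<Longrightarrow> xs k \<in> space (eucl d)" by (auto simp: P_def space_PiM)
    have "of_nat (card {j \<in> {..<n}. t \<le> real (cap_count d \<theta> n xs j)})
        = (\<Sum>j\<in>{j \<in> {..<n}. t \<le> real (cap_count d \<theta> n xs j)}. 1::ennreal)"
      by simp
    also have "\<dots> \<le> (\<Sum>j\<in>{j \<in> {..<n}. t \<le> real (cap_count d \<theta> n xs j)}. G j xs)"
      unfolding G_def C_def using exp_moment_ge_1_if_heavy[OF u _ xs] by (intro sum_mono) auto
    also have "\<dots> \<le> (\<Sum>j<n. G j xs)"
      by (intro sum_mono2) auto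
    finally show "of_nat (card {j \<in> {..<n}. t \<le> real (cap_count d \<theta> n xs j)}) \<le> (\<Sum>j<n. G j xs)" .
  qed
  also have "\<dots> = (\<Sum>j<n. \<integral>\<^sup>+xs. G j xs \<partial>P)"
    unfolding G_def using F_measurable by (intro nn_integral_sum) auto
  also have "\<dots> = (\<Sum>j<n. ennreal C * ennreal ((1 + sd d \<theta> * (exp u - 1)) ^ (n - 1)))"
    using G_integral by simp
  also have "\<dots> = ennreal (real n * C * (1 + sd d \<theta> * (exp u - 1)) ^ (n - 1))"
    using u sd_nonneg[of d \<theta>]
    by (simp add: C_def ennreal_mult ennreal_of_nat_eq_real_of_nat mult.assoc)
  finally show ?thesis unfolding P_def C_def .
qed

section \<open>Poisson averaging\<close>

lemma sums_poisson_pgf_deriv: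
  fixes lam a :: real
  shows "(\<lambda>n. lam ^ n / fact n * exp (- lam) * (real n * a ^ (n - 1))) sums (lam * exp (lam * (a - 1)))"
proof -
  have "(\<lambda>m. (lam * a) ^ m /\<^sub>R fact m) sums exp (lam * a)" by (rule exp_converges)
  then have "(\<lambda>m. (lam * exp (- lam)) * ((lam * a) ^ m / fact m)) sums ((lam * exp (- lam)) * exp (lam * a))"
    by (intro sums_mult) (simp add: divide_inverse mult.commute)
  moreover have "(\<lambda>m. (lam * exp (- lam)) * ((lam * a) ^ m / fact m))
      = (\<lambda>m. lam ^ Suc m / fact (Suc m) * exp (- lam) * (real (Suc m) * a ^ (Suc m - 1)))"
  proof
    fix m
    have "fact (Suc m) = real (Suc m) * fact m" by simp
    then show "(lam * exp (- lam)) * ((lam * a) ^ m / fact m)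
      = lam ^ Suc m / fact (Suc m) * exp (- lam) * (real (Suc m) * a ^ (Suc m - 1))"
      by (simp add: power_mult_distrib del: of_nat_Suc fact_Suc)
  qed
  moreover have "(lam * exp (- lam)) * exp (lam * a) = lam * exp (lam * (a - 1))"
    by (simp add: algebra_simps mult_exp_exp)
  ultimately have "(\<lambda>m. lam ^ Suc m / fact (Suc m) * exp (- lam) * (real (Suc m) * a ^ (Suc m - 1)))
      sums (lam * exp (lam * (a - 1)))"
    by (simp only:)
  then show ?thesis
    using sums_Suc_iff[of "\<lambda>n. lam ^ n / fact n * exp (- lam) * (real n * a ^ (n - 1))"] by simp
qed

lemma ppp_expect_count:
  assumes d: "1 \<le> d" and lam: "0 \<le> lam"
  shows "ppp_expect d lam (\<lambda>n xs. of_nat n) = ennreal lam"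
proof -
  have "ppp_expect d lam (\<lambda>n xs. of_nat n)
      = (\<Sum>n. ennreal (lam ^ n / fact n * exp (- lam) * (real n * 1 ^ (n - 1))))"
    unfolding ppp_expect_def
  proof (intro suminf_cong)
    fix n :: nat
    interpret P: prob_space "\<Pi>\<^sub>M k\<in>{..<n}. sphere_measure d"
      using prob_space_sphere_measure[OF d] by (rule prob_space_PiM)
    show "ennreal (lam ^ n / fact n * exp (- lam)) * (\<integral>\<^sup>+ xs. of_nat n \<partial>(\<Pi>\<^sub>M k\<in>{..<n}. sphere_measure d))
        = ennreal (lam ^ n / fact n * exp (- lam) * (real n * 1 ^ (n - 1)))"
      using lam by (subst ennreal_mult') (auto simp: P.emeasure_space_1 ennreal_of_nat_eq_real_of_nat)
  qed
  also have "\<dots> = ennreal lam"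
    using sums_poisson_pgf_deriv[of lam 1] lam by (simp add: sums_iff suminf_ennreal2)
  finally show ?thesis .
qed

lemma ppp_expect_heavy_count_exp_bound:
  assumes d: "2 \<le> d" and u: "0 \<le> u" and lam: "0 \<le> lam"
  shows "ppp_expect d lam (\<lambda>n xs. of_nat (card {j \<in> {..<n}. t \<le> real (cap_count d \<theta> n xs j)}))
     \<le> ennreal (lam * exp (u * (1 - t) + sd d \<theta> * lam * (exp u - 1)))"
proof -
  define a where "a = 1 + sd d \<theta> * (exp u - 1)"
  have a: "0 \<le> a" unfolding a_def using u sd_nonneg[of d \<theta>] by simp
  define g where "g n = exp (u * (1 - t)) * (lam ^ n / fact n * exp (- lam) * (real n * a ^ (n - 1)))" for n
  have g_sums: "g sums (exp (u * (1 - t)) * (lam * exp (lam * (a - 1))))"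
    unfolding g_def by (intro sums_mult sums_poisson_pgf_deriv)
  have "ppp_expect d lam (\<lambda>n xs. of_nat (card {j \<in> {..<n}. t \<le> real (cap_count d \<theta> n xs j)}))
      \<le> (\<Sum>n. ennreal (g n))"
    unfolding ppp_expect_def
  proof (intro suminf_le summableI)
    fix n :: nat
    have "ennreal (lam ^ n / fact n * exp (- lam)) * (\<integral>\<^sup>+ xs. of_nat (card {j \<in> {..<n}. t \<le> real (cap_count d \<theta> n xs j)}) \<partial>(\<Pi>\<^sub>M k\<in>{..<n}. sphere_measure d))
       \<le> ennreal (lam ^ n / fact n * exp (- lam)) * ennreal (real n * exp (u * (1 - t)) * a ^ (n - 1))"
      unfolding a_def by (intro mult_left_mono nn_integral_heavy_count_le[OF d u]) auto
    also have "\<dots> = ennreal (g n)"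
      unfolding g_def using lam a by (simp add: ennreal_mult[symmetric] mult_ac)
    finally show "ennreal (lam ^ n / fact n * exp (- lam)) * (\<integral>\<^sup>+ xs. of_nat (card {j \<in> {..<n}. t \<le> real (cap_count d \<theta> n xs j)}) \<partial>(\<Pi>\<^sub>M k\<in>{..<n}. sphere_measure d))
       \<le> ennreal (g n)" .
  qed
  also have "\<dots> = ennreal (exp (u * (1 - t)) * (lam * exp (lam * (a - 1))))"
    using g_sums lam a by (subst suminf_ennreal2) (auto simp: sums_iff g_def)
  also have "exp (u * (1 - t)) * (lam * exp (lam * (a - 1))) = lam * exp (u * (1 - t) + lam * (a - 1))"
    by (simp add: exp_add mult_ac)
  also have "lam * (a - 1) = sd d \<theta> * lam * (exp u - 1)"
    by (simp add: a_def)
  finally show ?thesis .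
qed

section \<open>The estimate for large dimension\<close>

text \<open>With \<open>q = \<Delta>\<^sup>1\<^sup>/\<^sup>3\<close>, \<open>u = 1/(2q)\<close> and \<open>t = q\<^sup>3 + q\<^sup>2\<close>, the bound \<open>e\<^sup>u \<le> 1 + u + u\<^sup>2\<close> turns the
  Chernoff exponent into \<open>1/(2q) - q/4\<close>.\<close>
lemma chernoff_exponent_le:
  fixes D q u t :: real
  assumes d: "1 \<le> d" and D: "(12 * real d) ^ 3 \<le> D" and q: "q = D powr (1/3)"
    and t: "t = D * (1 + D powr (-1/3))" and u: "u = 1 / (2 * q)"
  shows "exp (u * (1 - t) + D * (exp u - 1)) \<le> 1 / (2 * real d)"
proof -
  have D0: "0 < D" using D d by (smt (verit) of_nat_0_less_iff zero_less_power mult_pos_pos gr0I not_one_le_zero)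
  have q3: "q ^ 3 = D" using D0 unfolding q by (simp add: powr_realpow[symmetric] powr_powr)
  have q0: "0 < q" using D0 q by simp
  have "(12 * real d) powr 3 \<le> D" using D d by (simp add: powr_realpow)
  then have "((12 * real d) powr 3) powr (1/3) \<le> D powr (1/3)" by (intro powr_mono2) auto
  moreover have "((12 * real d) powr 3) powr (1/3) = 12 * real d" by (subst powr_powr) simp
  ultimately have q12: "12 * real d \<le> q" unfolding q by simp
  have "D powr (-1/3) = 1 / q" unfolding q using D0 by (simp add: powr_minus_divide)
  then have tq: "t = q^3 + q^2"
    unfolding t q3[symmetric] using q0 by (simp add: field_simps power2_eq_square power3_eq_cube)
  have u0: "0 \<le> u" "u \<le> 1" using q0 q12 d unfolding u by auto
  have "D * (exp u - 1) \<le> D * (u + u^2)"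
    using exp_bound[OF u0] D0 by (intro mult_left_mono) auto
  then have "u * (1 - t) + D * (exp u - 1) \<le> u * (1 - t) + D * (u + u^2)" by simp
  also have "\<dots> = 1 / (2 * q) - q / 4"
    unfolding tq q3[symmetric] u using q0 by (simp add: field_simps power2_eq_square power3_eq_cube)
  also have "\<dots> \<le> 1 - 3 * real d"
  proof -
    have "1 / (2 * q) \<le> 1" using q12 d q0 by (simp add: field_simps)
    then show ?thesis using q12 by linarith
  qed
  finally have E: "u * (1 - t) + D * (exp u - 1) \<le> 1 - 3 * real d" .
  have "2 * real d \<le> exp (3 * real d - 1)"
    using exp_ge_add_one_self[of "3 * real d - 1"] d by linarith
  then have "exp (1 - 3 * real d) \<le> 1 / (2 * real d)"
    using d by (simp add: exp_diff field_simps exp_minus)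
  then show ?thesis using E by (meson exp_le_cancel_iff order_trans)
qed

lemma ppp_expect_heavy_caps_le:
  assumes d: "2 \<le> d" and lam: "0 < lam" and large: "(12 * real d) ^ 3 \<le> sd d \<theta> * lam"
  shows "ppp_expect d lam
          (\<lambda>n xs. of_nat (card {j \<in> {..<n}.
             real (cap_count d \<theta> n xs j) \<ge> sd d \<theta> * lam * (1 + (sd d \<theta> * lam) powr (-1/3))}))
        \<le> ennreal (1 / (2 * real d)) * ppp_expect d lam (\<lambda>n xs. of_nat n)"
proof -
  define D where "D = sd d \<theta> * lam"
  define u where "u = 1 / (2 * D powr (1/3))"
  have "0 \<le> u" unfolding u_def by simp
  then have "ppp_expect d lam (\<lambda>n xs. of_nat (card {j \<in> {..<n}. D * (1 + D powr (-1/3)) \<le> real (cap_count d \<theta> n xs j)}))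
      \<le> ennreal (lam * exp (u * (1 - D * (1 + D powr (-1/3))) + D * (exp u - 1)))"
    using ppp_expect_heavy_count_exp_bound[OF d _ less_imp_le[OF lam]] by (simp add: D_def)
  also have "\<dots> \<le> ennreal (lam * (1 / (2 * real d)))"
    using chernoff_exponent_le[OF _ large[folded D_def] refl refl u_def[unfolded D_def[symmetric]]] d lam
    by (intro ennreal_leI mult_left_mono) auto
  also have "\<dots> = ennreal (1 / (2 * real d)) * ppp_expect d lam (\<lambda>n xs. of_nat n)"
    using ppp_expect_count[of d lam] d lam by (simp add: ennreal_mult[symmetric] mult.commute)
  finally show ?thesis unfolding D_def .
qed

lemma eventually_cap_intensity_large:
  assumes c: "cos \<theta> < 1"
  shows "eventually (\<lambda>d. (12 * real d) ^ 3 \<le> sd d \<theta> * (sqrt (real d) / (2 * ln (real d))) ^ d) at_top"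
proof -
  define \<rho> where "\<rho> = (1 - cos \<theta>) / 4"
  have \<rho>: "0 < \<rho>" using c by (simp add: \<rho>_def)
  have "filterlim (\<lambda>d::nat. sqrt (real d) / ln (real d)) at_top at_top" by real_asymp
  then have "eventually (\<lambda>d::nat. 4 / \<rho> \<le> sqrt (real d) / ln (real d)) at_top"
    by (simp add: filterlim_at_top)
  moreover have "eventually (\<lambda>d::nat. (12 * real d) ^ 3 \<le> 2 ^ d) at_top" by real_asymp
  moreover have "eventually (\<lambda>d::nat. 2 \<le> d) at_top" by (rule eventually_ge_at_top)
  ultimately show ?thesis
  proof eventually_elim
    case (elim d)
    define lam where "lam = (sqrt (real d) / (2 * ln (real d))) ^ d"
    have "0 < ln (real d)" using elim by simp
    then have "2 \<le> \<rho> * (sqrt (real d) / (2 * ln (real d)))"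
      using elim \<rho> by (simp add: field_simps)
    then have "2 ^ d \<le> (\<rho> * (sqrt (real d) / (2 * ln (real d)))) ^ d" by (intro power_mono) auto
    also have "\<dots> = \<rho> ^ d * lam" unfolding lam_def by (rule power_mult_distrib)
    also have "\<dots> \<le> sd d \<theta> * lam"
      using sd_ge_power[of d \<theta>] elim c \<open>0 < ln (real d)\<close> by (intro mult_right_mono) (auto simp: \<rho>_def lam_def)
    finally show ?case using elim by (simp add: lam_def)
  qed
qed

theorem lemmaA3:
  fixes \<theta> :: real
  assumes "0 < \<theta>" and "\<theta> < pi / 2"
  shows "\<exists>d0::nat. \<forall>d\<ge>d0.
    (let lam = (sqrt (real d) / (2 * ln (real d))) ^ d;
         \<Delta> = sd d \<theta> * lam
     in ppp_expect d lam
          (\<lambda>n xs. of_nat (card {j \<in> {..<n}.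
                     real (cap_count d \<theta> n xs j) \<ge> \<Delta> * (1 + \<Delta> powr (-1/3))}))
        \<le> ennreal (1 / (2 * real d)) * ppp_expect d lam (\<lambda>n xs. of_nat n))"
proof -
  have "cos \<theta> < cos 0" using assms by (intro cos_monotone_0_pi) auto
  then have "eventually (\<lambda>d. 2 \<le> d \<and> (12 * real d) ^ 3 \<le> sd d \<theta> * (sqrt (real d) / (2 * ln (real d))) ^ d) at_top"
    using eventually_cap_intensity_large[of \<theta>] eventually_ge_at_top[of 2]
    by (simp add: eventually_conj)
  then obtain d0 where d0: "\<And>d. d0 \<le> d \<Longrightarrow> 2 \<le> d \<and> (12 * real d) ^ 3 \<le> sd d \<theta> * (sqrt (real d) / (2 * ln (real d))) ^ d"
    unfolding eventually_at_top_linorder by blast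
  show ?thesis
    unfolding Let_def
  proof (intro exI[of _ d0] allI impI ppp_expect_heavy_caps_le)
    fix d :: nat assume "d0 \<le> d"
    then have d: "2 \<le> d" and large: "(12 * real d) ^ 3 \<le> sd d \<theta> * (sqrt (real d) / (2 * ln (real d))) ^ d"
      using d0 by auto
    show "2 \<le> d" by (fact d)
    show "0 < (sqrt (real d) / (2 * ln (real d))) ^ d" using d by simp
    show "(12 * real d) ^ 3 \<le> sd d \<theta> * (sqrt (real d) / (2 * ln (real d))) ^ d" by (fact large)
  qed
qed

end
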